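(* Let $X$ be a pointed set and $k\ge 1$. Then the diagram $$\mathrm{ab}\circ H_k=\pi_k\circ\mu\colon F[X]\to \bar{\mathbb Z}[X^{\wedge k}]$$ commutes, where $H_k\colon F[X]\to F[X^{\wedge k}]$ is the combinatorial James–Hopf map, $\mu\colon F[X]\to\mathbb Z\langle\langle X\rangle\rangle$ is the Magnus embedding, $\pi_k$ is the projection of a formal power series onto its homogeneous component of degree $k$, and $\mathrm{ab}\colon F[X^{\wedge k}]\to\bar{\mathbb Z}[X^{\wedge k}]$ is abelianization.
   Context: For a pointed set $X$ with basepoint $*$, $F[X]$ is the free group on $X$ modulo the relation $*=1$ (the reduced free group; for pointed simplicial sets it is applied degreewise, Milnor's construction). $X^{\wedge k}$ is the $k$-fold smash product; its non-basepoint elements are $x_1\wedge\dots\wedge x_k$ with all $x_i\neq *$. $\bar{\mathbb Z}[Y]=\mathbb Z[Y]/\mathbb Z[*]$ is the free abelian group on $Y\setminus\{*\}$. $\mathbb Z\langle\langle X\rangle\rangle$ is the ring of formal power series in the non-commuting variables $X\setminus\{*\}$, and its degree-$k$ homogeneous component is identified with $\bar{\mathbb Z}[X^{\wedge k}]\cong\bar{\mathbb Z}[X]^{\otimes k}$ via $x_1\wedge\dots\wedge x_k\leftrightarrow x_1\cdots x_k$. The Magnus embedding is the homomorphism $\mu$ with $\mu(x)=1+x$ for $x\in X\setminus\{*\}$. Combinatorial James–Hopf map: for a reduced word $w=x_1^{\varepsilon_1}\cdots x_n^{\varepsilon_n}\in F[X]$ ($x_i\in X$, $\varepsilon_i=\pm1$),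 $$H_k(w)=\prod_{(i_1,\dots,i_k)}(x_{i_1}\wedge\dots\wedge x_{i_k})^{\varepsilon_{i_1}\cdots\varepsilon_{i_k}}\in F[X^{\wedge k}],$$ the product taken over all sequences $1\le i_1,\dots,i_k\le n$ with $i_j\le i_{j+1}-\frac{\varepsilon_{i_{j+1}}+1}{2}$ for all $j$ (i.e. $i_j<i_{j+1}$ if $\varepsilon_{i_{j+1}}=1$, and $i_j\le i_{j+1}$ if $\varepsilon_{i_{j+1}}=-1$), with factors arranged in right lexicographic order: $(i_1,\dots,i_k)$ precedes $(j_1,\dots,j_k)$ iff at the largest position $m$ where they differ, $i_m<j_m$. On positive words this restricts to the classical combinatorial James–Hopf map $x_1\cdots x_n\mapsto\prod_{i_1<\dots<i_k}x_{i_1}\wedge\dots\wedge x_{i_k}$ on the James construction. For simplicial sets $H_k$ is defined degreewise. *)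

theory Defs
  imports Main
begin

text \<open>Pointed set: a type 'a together with a basepoint b.
  A letter of the free group F[X] is a pair (x, e) with x \<noteq> b;
  e = True means exponent +1, e = False means exponent -1.\<close>

type_synonym 'a fletter = "'a \<times> bool"

definition reduced_words :: "'a \<Rightarrow> 'a fletter list set" where
  "reduced_words b = {w. (\<forall>l\<in>set w. fst l \<noteq> b) \<and>
      (\<forall>i. Suc i < length w \<longrightarrow>
          \<not> (fst (w!i) = fst (w!Suc i) \<and> snd (w!i) \<noteq> snd (w!Suc i)))}"

definition free_reduce :: "'g fletter list \<Rightarrow> 'g fletter list" where
  "free_reduce ws = foldr (\<lambda>a acc. case acc of [] \<Rightarrow> [a]
      | c # r \<Rightarrow> (if fst a = fst c \<and> snd a \<noteq> snd c then r else a # acc)) ws []"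

text \<open>Index sequences (0-based) of length k for the word w, with
  i_j < i_(j+1) if eps_(i_(j+1)) = +1 and i_j \<le> i_(j+1) if eps_(i_(j+1)) = -1,
  listed in right lexicographic order (first by last entry, then recursively).\<close>
fun jh_seqs :: "'a fletter list \<Rightarrow> nat \<Rightarrow> nat list list" where
  "jh_seqs w 0 = [[]]"
| "jh_seqs w (Suc k) =
     concat (map (\<lambda>m. map (\<lambda>p. p @ [m])
        (filter (\<lambda>p. p = [] \<or> (if snd (w!m) then last p < m else last p \<le> m)) (jh_seqs w k)))
      [0..<length w])"

text \<open>The factor (x_{i_1} \<and> ... \<and> x_{i_k})^(eps_{i_1}...eps_{i_k}) as a letter of
  F[X^k-smash]; a smash element x_1\<and>...\<and>x_k is represented by the list [x_1,...,x_k].\<close>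
definition jh_factor :: "'a fletter list \<Rightarrow> nat list \<Rightarrow> 'a list fletter" where
  "jh_factor w p = (map (\<lambda>i. fst (w!i)) p, even (length (filter (\<lambda>i. \<not> snd (w!i)) p)))"

definition james_hopf :: "nat \<Rightarrow> 'a fletter list \<Rightarrow> 'a list fletter list" where
  "james_hopf k w = free_reduce (map (jh_factor w) (jh_seqs w k))"

text \<open>Abelianization F[Y] \<rightarrow> Zbar[Y]; elements of the free abelian group are
  represented as integer-valued coefficient functions.\<close>
definition ab_word :: "'g fletter list \<Rightarrow> 'g \<Rightarrow> int" where
  "ab_word ws y = (\<Sum>l\<leftarrow>ws. if fst l = y then (if snd l then 1 else -1) else 0)"

text \<open>Formal power series in non-commuting variables: coefficient functions on words.\<close>
type_synonym 'a ncps = "'a list \<Rightarrow> int"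

definition ps_one :: "'a ncps" where
  "ps_one s = (if s = [] then 1 else 0)"

definition ps_mult :: "'a ncps \<Rightarrow> 'a ncps \<Rightarrow> 'a ncps" where
  "ps_mult f g s = (\<Sum>i\<le>length s. f (take i s) * g (drop i s))"

definition ps_one_plus :: "'a \<Rightarrow> 'a ncps" where
  "ps_one_plus x s = (if s = [] \<or> s = [x] then 1 else 0)"

text \<open>(1 + x)^(-1) = \<Sum>n (-1)^n x^n\<close>
definition ps_one_plus_inv :: "'a \<Rightarrow> 'a ncps" where
  "ps_one_plus_inv x s = (if (\<forall>c\<in>set s. c = x) then (-1) ^ length s else 0)"

definition magnus :: "'a fletter list \<Rightarrow> 'a ncps" where
  "magnus w = foldr (\<lambda>l acc. ps_mult (if snd l then ps_one_plus (fst l)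
                                      else ps_one_plus_inv (fst l)) acc) w ps_one"

definition ps_proj :: "nat \<Rightarrow> 'a ncps \<Rightarrow> 'a list \<Rightarrow> int" where
  "ps_proj k f s = (if length s = k then f s else 0)"

end

theory Submission imports Defs begin

text \<open>Abelianizing \<open>H\<^sub>k(w)\<close> forgets
  the order of the factors and the free cancellations, so its coefficient at \<open>s\<close> is the
  signed number of admissible index sequences of length \<open>k\<close> labelled \<open>s\<close>. Splitting these
  sequences according to whether they start at the first letter of \<open>w\<close> shows that this
  signed count obeys the same recursion in the first letter as the Magnus coefficient,
  which comes from \<open>\<mu>(x) = 1 + x\<close> and \<open>\<mu>(x\<^sup>-\<^sup>1) = 1 - x\<mu>(x\<^sup>-\<^sup>1)\<close>.\<close>

lemma ab_word_Nil: "ab_word [] y = 0"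
  by (simp add: ab_word_def)

lemma ab_word_Cons:
  "ab_word (a # ws) y = (if fst a = y then (if snd a then 1 else -1) else 0) + ab_word ws y"
  by (simp add: ab_word_def)

lemma ab_word_free_reduce: "ab_word (free_reduce ws) = ab_word ws"
proof (induction ws)
  case Nil
  show ?case by (simp add: free_reduce_def)
next
  case (Cons a ws)
  have reduce_Cons: "free_reduce (a # ws) = (case free_reduce ws of [] \<Rightarrow> [a]
      | c # r \<Rightarrow> (if fst a = fst c \<and> snd a \<noteq> snd c then r else a # c # r))"
    by (simp add: free_reduce_def split: list.split)
  have "ab_word (free_reduce (a # ws)) y = ab_word [a] y + ab_word (free_reduce ws) y" for y
    unfolding reduce_Cons by (cases "free_reduce ws") (auto simp: ab_word_Cons ab_word_Nil)
  with Cons.IH show ?case by (simp add: fun_eq_iff ab_word_Cons ab_word_Nil)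
qed

lemma ps_mult_Nil: "ps_mult f g [] = f [] * g []"
  by (simp add: ps_mult_def)

lemma ps_mult_Cons:
  "ps_mult f g (y # t) = f [] * g (y # t) + (\<Sum>i\<le>length t. f (y # take i t) * g (drop i t))"
  unfolding ps_mult_def by (simp add: sum.atMost_Suc_shift del: sum.atMost_Suc)

lemma ps_mult_one_plus_Cons:
  "ps_mult (ps_one_plus x) g (y # t) = g (y # t) + (if y = x then g t else 0)"
proof -
  have "(\<Sum>i\<le>length t. ps_one_plus x (y # take i t) * g (drop i t)) =
        (\<Sum>i\<le>length t. if i = 0 then (if y = x then g t else 0) else 0)"
    by (rule sum.cong) (auto simp: ps_one_plus_def)
  then show ?thesis by (simp add: ps_mult_Cons ps_one_plus_def)
qed

lemma ps_mult_one_plus_inv_Cons: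
  "ps_mult (ps_one_plus_inv x) g (y # t) =
     g (y # t) - (if y = x then ps_mult (ps_one_plus_inv x) g t else 0)"
proof -
  have "(\<Sum>i\<le>length t. ps_one_plus_inv x (y # take i t) * g (drop i t)) =
        (\<Sum>i\<le>length t. if y = x then - (ps_one_plus_inv x (take i t) * g (drop i t)) else 0)"
    by (rule sum.cong) (auto simp: ps_one_plus_inv_def)
  also have "\<dots> = (if y = x then - ps_mult (ps_one_plus_inv x) g t else 0)"
    by (simp add: ps_mult_def sum_negf)
  finally show ?thesis by (simp add: ps_mult_Cons ps_one_plus_inv_def)
qed

lemma magnus_at_Nil: "magnus w [] = 1"
  by (induction w) (auto simp: magnus_def ps_one_def ps_mult_Nil ps_one_plus_def ps_one_plus_inv_def)

lemma magnus_Cons_pos: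
  "magnus ((x, True) # w) (y # t) = magnus w (y # t) + (if y = x then magnus w t else 0)"
  by (simp add: magnus_def ps_mult_one_plus_Cons)

lemma magnus_Cons_neg:
  "magnus ((x, False) # w) (y # t) =
     magnus w (y # t) - (if y = x then magnus ((x, False) # w) t else 0)"
  by (simp add: magnus_def ps_mult_one_plus_inv_Cons)

definition jh_precedes :: "'a fletter list \<Rightarrow> nat \<Rightarrow> nat \<Rightarrow> bool" where
  "jh_precedes w a b = (if snd (w!b) then a < b else a \<le> b)"

definition jh_admissible :: "'a fletter list \<Rightarrow> nat \<Rightarrow> nat list set" where
  "jh_admissible w k =
     {p. length p = k \<and> (\<forall>i\<in>set p. i < length w) \<and> successively (jh_precedes w) p}"

definition jh_label :: "'a fletter list \<Rightarrow> nat list \<Rightarrow> 'a list" where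
  "jh_label w p = map (\<lambda>i. fst (w!i)) p"

definition jh_sign :: "'a fletter list \<Rightarrow> nat list \<Rightarrow> int" where
  "jh_sign w p = (if even (length (filter (\<lambda>i. \<not> snd (w!i)) p)) then 1 else -1)"

definition jh_count :: "'a fletter list \<Rightarrow> nat \<Rightarrow> 'a list \<Rightarrow> int" where
  "jh_count w k s = (\<Sum>p\<in>jh_admissible w k. if jh_label w p = s then jh_sign w p else 0)"

lemma jh_sign_Cons: "jh_sign w (i # p) = (if snd (w!i) then jh_sign w p else - jh_sign w p)"
  by (simp add: jh_sign_def)

lemma finite_jh_admissible: "finite (jh_admissible w k)"
proof -
  have "jh_admissible w k \<subseteq> {p. set p \<subseteq> {..<length w} \<and> length p = k}"
    by (auto simp: jh_admissible_def)
  then show ?thesis using finite_lists_length_eq[of "{..<length w}" k] finite_subset by blast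
qed

lemma set_jh_seqs: "set (jh_seqs w k) = jh_admissible w k"
proof (induction k)
  case 0
  show ?case by (auto simp: jh_admissible_def)
next
  case (Suc k)
  show ?case
  proof (intro set_eqI iffI)
    fix p assume "p \<in> set (jh_seqs w (Suc k))"
    then obtain m q where "m < length w" "q \<in> jh_admissible w k" "p = q @ [m]"
       "q = [] \<or> (if snd (w!m) then last q < m else last q \<le> m)"
      using Suc by auto
    then show "p \<in> jh_admissible w (Suc k)"
      by (auto simp: jh_admissible_def successively_append_iff jh_precedes_def)
  next
    fix p assume p: "p \<in> jh_admissible w (Suc k)"
    then have "p \<noteq> []" by (auto simp: jh_admissible_def)
    then obtain q m where qm: "p = q @ [m]" by (metis rev_exhaust)
    with p have "m < length w" "q \<in> jh_admissible w k"
       "q = [] \<or> (if snd (w!m) then last q < m else last q \<le> m)"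
      by (auto simp: jh_admissible_def successively_append_iff jh_precedes_def)
    with Suc qm show "p \<in> set (jh_seqs w (Suc k))"
      by (auto intro!: bexI[of _ m] imageI)
  qed
qed

lemma distinct_concat_map:
  assumes "distinct xs" "\<And>x. x \<in> set xs \<Longrightarrow> distinct (f x)"
    "\<And>x y. x \<in> set xs \<Longrightarrow> y \<in> set xs \<Longrightarrow> x \<noteq> y \<Longrightarrow> set (f x) \<inter> set (f y) = {}"
  shows "distinct (concat (map f xs))"
  using assms by (induction xs) auto

lemma distinct_jh_seqs: "distinct (jh_seqs w k)"
proof (induction k)
  case (Suc k)
  show ?case unfolding jh_seqs.simps
    by (rule distinct_concat_map) (auto simp: distinct_map inj_on_def Suc)
qed simp

lemma ab_word_james_hopf: "ab_word (james_hopf k w) s = jh_count w k s"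
proof -
  have "ab_word (james_hopf k w) s = ab_word (map (jh_factor w) (jh_seqs w k)) s"
    by (simp add: james_hopf_def ab_word_free_reduce)
  also have "\<dots> = (\<Sum>p\<leftarrow>jh_seqs w k. if jh_label w p = s then jh_sign w p else 0)"
    unfolding ab_word_def map_map o_def
    by (rule arg_cong[where f=sum_list], rule map_cong)
       (auto simp: jh_factor_def jh_label_def jh_sign_def)
  also have "\<dots> = jh_count w k s"
    by (simp add: jh_count_def sum_list_distinct_conv_sum_set distinct_jh_seqs set_jh_seqs)
  finally show ?thesis .
qed

lemma jh_count_length_neq: "length s \<noteq> k \<Longrightarrow> jh_count w k s = 0"
  unfolding jh_count_def by (rule sum.neutral) (auto simp: jh_admissible_def jh_label_def)

lemma jh_count_Nil: "jh_count w 0 [] = 1"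
proof -
  have "jh_admissible w 0 = {[]}" by (auto simp: jh_admissible_def)
  then show ?thesis by (simp add: jh_count_def jh_label_def jh_sign_def)
qed

lemma jh_admissible_Nil_Suc: "jh_admissible [] (Suc k) = {}"
  by (auto simp: jh_admissible_def)

lemma map_Suc_in_jh_admissible_Cons:
  "map Suc r \<in> jh_admissible (l # w) k \<longleftrightarrow> r \<in> jh_admissible w k"
  by (auto simp: jh_admissible_def successively_map jh_precedes_def)

lemma successively_jh_precedes_ge:
  "successively (jh_precedes w) (a # p) \<Longrightarrow> x \<in> set p \<Longrightarrow> a \<le> x"
proof (induction p arbitrary: a)
  case (Cons b p)
  then have "a \<le> b" "successively (jh_precedes w) (b # p)"
    by (auto simp: jh_precedes_def split: if_splits)
  with Cons show ?case by (cases "x = b") force+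
qed simp

lemma positive_in_range_map_Suc: "\<forall>i\<in>set p. 0 < i \<Longrightarrow> p \<in> range (map Suc)"
  by (rule image_eqI[of _ _ "map (\<lambda>i. i - 1) p"]) (induction p, auto)

text \<open>An admissible sequence either avoids the first letter \<open>l\<close>, or starts at it; after a
  positive letter the rest must avoid \<open>l\<close>, after a negative one \<open>l\<close> may be repeated.\<close>

lemma jh_admissible_Cons_Suc:
  "jh_admissible (l # w) (Suc k) =
     Cons 0 ` (if snd l then map Suc ` jh_admissible w k else jh_admissible (l # w) k)
     \<union> map Suc ` jh_admissible w (Suc k)"
  (is "?A = Cons 0 ` ?B \<union> ?C")
proof (intro set_eqI iffI)
  fix p assume p: "p \<in> ?A"
  then obtain a q where pq: "p = a # q" by (cases p) (auto simp: jh_admissible_def)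
  have q: "q \<in> jh_admissible (l # w) k" and ge: "\<And>x. x \<in> set q \<Longrightarrow> a \<le> x"
    using p pq successively_jh_precedes_ge by (auto simp: jh_admissible_def successively_Cons)
  show "p \<in> Cons 0 ` ?B \<union> ?C"
  proof (cases "a = 0")
    case True
    have "q \<in> ?B"
    proof (cases "snd l")
      case pos: True
      have "\<forall>i\<in>set q. 0 < i"
      proof (cases q)
        case (Cons b r)
        have "jh_precedes (l # w) 0 b" using p pq Cons True by (auto simp: jh_admissible_def)
        with pos have "0 < b" by (cases b) (auto simp: jh_precedes_def)
        moreover have "successively (jh_precedes (l # w)) (b # r)"
          using q Cons by (simp add: jh_admissible_def)
        ultimately show ?thesis using Cons successively_jh_precedes_ge by fastforce
      qed simp
      then obtain r where "q = map Suc r" using positive_in_range_map_Suc by blast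
      with q pos show ?thesis by (auto simp: map_Suc_in_jh_admissible_Cons)
    qed (use q in simp)
    with pq True show ?thesis by simp
  next
    case False
    with ge pq have "\<forall>i\<in>set p. 0 < i" by fastforce
    then obtain r where "p = map Suc r" using positive_in_range_map_Suc by blast
    with p show ?thesis by (auto simp: map_Suc_in_jh_admissible_Cons)
  qed
next
  fix p assume p: "p \<in> Cons 0 ` ?B \<union> ?C"
  show "p \<in> ?A"
  proof (cases "p \<in> ?C")
    case True
    then show ?thesis using map_Suc_in_jh_admissible_Cons by blast
  next
    case False
    then obtain q where q: "p = 0 # q" "q \<in> ?B" using p by auto
    show ?thesis
    proof (cases "snd l")
      case True
      then obtain r where r: "q = map Suc r" "r \<in> jh_admissible w k" using q by auto
      then have "q \<in> jh_admissible (l # w) k" using map_Suc_in_jh_admissible_Cons by blast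
      with q r show ?thesis by (cases r) (auto simp: jh_admissible_def jh_precedes_def)
    next
      case False
      with q show ?thesis
        by (cases q) (auto simp: jh_admissible_def jh_precedes_def nth_Cons split: nat.splits)
    qed
  qed
qed

lemma jh_count_Cons_Cons:
  "jh_count (l # w) (Suc (length t)) (y # t) = jh_count w (Suc (length t)) (y # t) +
     (if y = fst l then (if snd l then jh_count w (length t) t
                         else - jh_count (l # w) (length t) t) else 0)"
proof -
  define f where "f p = (if jh_label (l # w) p = y # t then jh_sign (l # w) p else 0)" for p
  define B where "B = (if snd l then map Suc ` jh_admissible w (length t)
                       else jh_admissible (l # w) (length t))"
  define C where "C = jh_admissible w (Suc (length t))"
  have inj: "inj_on (map Suc) X" for X :: "nat list set" by (auto simp: inj_on_def)
  have "jh_count (l # w) (Suc (length t)) (y # t) = sum f (Cons 0 ` B \<union> map Suc ` C)"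
    by (simp add: jh_count_def jh_admissible_Cons_Suc f_def B_def C_def)
  also have "\<dots> = sum (f \<circ> Cons 0) B + sum (f \<circ> map Suc) C"
    by (subst sum.union_disjoint)
       (auto simp: B_def C_def finite_jh_admissible sum.reindex inj)
  also have "sum (f \<circ> map Suc) C = jh_count w (Suc (length t)) (y # t)"
    unfolding jh_count_def C_def by (rule sum.cong) (auto simp: f_def jh_label_def jh_sign_def
        filter_map o_def)
  also have "sum (f \<circ> Cons 0) B = (if y = fst l then (if snd l then jh_count w (length t) t
                                   else - jh_count (l # w) (length t) t) else 0)"
  proof (cases "snd l")
    case True
    then have "sum (f \<circ> Cons 0) B = sum (f \<circ> Cons 0 \<circ> map Suc) (jh_admissible w (length t))"
      by (simp add: B_def sum.reindex[OF inj])
    with True show ?thesis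
      by (auto simp: jh_count_def f_def jh_label_def jh_sign_def filter_map o_def
          intro!: sum.cong)
  next
    case False
    then have "sum (f \<circ> Cons 0) B = (\<Sum>q\<in>jh_admissible (l # w) (length t).
        if y = fst l then - (if jh_label (l # w) q = t then jh_sign (l # w) q else 0) else 0)"
      by (auto simp: B_def f_def jh_label_def jh_sign_Cons intro!: sum.cong)
    with False show ?thesis by (simp add: jh_count_def sum_negf)
  qed
  finally show ?thesis by linarith
qed

lemma jh_count_eq_magnus: "jh_count w (length s) s = magnus w s"
proof (induction w arbitrary: s)
  case Nil
  show ?case
  proof (cases s)
    case (Cons y t)
    then show ?thesis by (simp add: jh_count_def jh_admissible_Nil_Suc magnus_def ps_one_def)
  qed (simp add: jh_count_Nil magnus_at_Nil)
next
  case (Cons l w)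
  note IH = Cons.IH
  obtain x e where l: "l = (x, e)" by force
  show ?case
  proof (induction s)
    case Nil
    show ?case by (simp add: jh_count_Nil magnus_at_Nil)
  next
    case (Cons y t)
    with IH[of "y # t"] IH[of t] show ?case
      by (cases e) (simp_all add: l jh_count_Cons_Cons magnus_Cons_pos magnus_Cons_neg)
  qed
qed

theorem theorem2p2:
  fixes b :: 'a and w :: "'a fletter list" and k :: nat
  assumes "k \<ge> 1"
    and "w \<in> reduced_words b"
  shows "ab_word (james_hopf k w) = ps_proj k (magnus w)"
proof
  fix s
  show "ab_word (james_hopf k w) s = ps_proj k (magnus w) s"
    using jh_count_eq_magnus[of w s] jh_count_length_neq[of s k w]
    by (cases "length s = k") (auto simp: ab_word_james_hopf ps_proj_def)
qed

end
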